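(* Let $N\ge1$ be an integer and let $v_N>e^{x_N}$ be a number such that for every $u>v_N$, $\operatorname{li}(f_N(u))-u=\theta\cdot13\,(N+1)!\,\frac{u(\log\log u)^N}{\log^{N+1}u}$ for some $|\theta|\le1$ (such $v_N$ exists). Then for every $u\ge v_N$ there is $\theta$ with $|\theta|\le1$ such that \[ \operatorname{ali}(u)=f_N(u)+26\,\theta\,(N+1)!\,u\Bigl(\frac{\log\log u}{\log u}\Bigr)^N. \]
   Context: $\operatorname{li}(x)=\mathrm{p.v.}\int_0^x\frac{dt}{\log t}$ for real $x>1$, and $\operatorname{ali}\colon\mathbb{R}\to(1,\infty)$ is its inverse function. The polynomials $P_n(y)$ are defined by $P_0(y)=y-1$ and, for $n\ge1$, $P_n=nP_{n-1}-P'_{n-1}+\frac{1}{n}\sum_{k=1}^{n-1}k\{(k-1)P_{k-1}-P_k-P'_{k-1}\}P_{n-k-1}$. $f_N$ is defined by $f_N(e^x)=xe^x\bigl(1+\sum_{n=1}^N\frac{P_{n-1}(\log x)}{x^n}\bigr)$. The integers $a_n$: $a_1=1$, $a_n=n\cdot n!+\sum_{k=1}^{n-1}k!\,a_{n-k}$. Let $c_N>0$ be a constant with $x(1-\sum_{n=1}^N n!x^{-n})\ge1$ for all real $x\ge c_N$, $d_N>0$ a constant such that for all complex $|x|\ge d_N$, $\log(1-\sum_{n=1}^N n!x^{-n})^{-1}=\sum_{n=1}^N\frac{a_n}{n}x^{-n}+\theta\frac{a_{N+1}}{N+1}x^{-N-1}$ with $|\theta|\le1$, $\alpha_N=\max(e,c_N,d_N)$,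 $\beta_N\ge e$ the solution of $x/\log x=\alpha_N$, and $x_N=\max(\beta_N,4(N+1)/3,e^2)$. *)

theory Defs
  imports "HOL-Analysis.Analysis" "HOL-Computational_Algebra.Polynomial"
begin

definition li :: "real \<Rightarrow> real" where
  "li x = Lim (at_right 0)
     (\<lambda>\<epsilon>. integral {0..1-\<epsilon>} (\<lambda>t. 1 / ln t) + integral {1+\<epsilon>..x} (\<lambda>t. 1 / ln t))"

definition ali :: "real \<Rightarrow> real" where
  "ali u = (THE x. x > 1 \<and> li x = u)"

function P :: "nat \<Rightarrow> real poly" where
  "P 0 = [:-1, 1:]"
| "P (Suc m) =
     smult (real (Suc m)) (P m) - pderiv (P m)
     + smult (1 / real (Suc m))
        (\<Sum>k\<in>{1..m}. smult (real k)
            (smult (real k - 1) (P (k - 1)) - P k - pderiv (P (k - 1))) * P (m - k))"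
  by pat_completeness auto
termination
  by (relation "Wellfounded.measure id") auto

text \<open>f_N(e^x) = x e^x (1 + sum_{n=1}^N P_{n-1}(log x) / x^n), written in terms of u = e^x.\<close>
definition f :: "nat \<Rightarrow> real \<Rightarrow> real" where
  "f N u = ln u * u * (1 + (\<Sum>n=1..N. poly (P (n - 1)) (ln (ln u)) / (ln u) ^ n))"

text \<open>The integers a_n (a_0 is unused and set to 0).\<close>
function a :: "nat \<Rightarrow> int" where
  "a 0 = 0"
| "a (Suc 0) = 1"
| "a (Suc (Suc m)) = int (Suc (Suc m)) * fact (Suc (Suc m))
     + (\<Sum>k\<in>{1..Suc m}. fact k * a (Suc (Suc m) - k))"
  by pat_completeness auto
termination
  by (relation "Wellfounded.measure id") auto

end

theory Submission
  imports Defs "HOL-Real_Asymp.Real_Asymp"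
begin

text \<open>Since li is increasing with derivative \<open>1 / ln t\<close>, any \<open>x, y \<in> (1, u\<^sup>2]\<close> satisfy
  \<open>\<bar>x - y\<bar> \<le> 2 ln u \<bar>li x - li y\<bar>\<close>. For \<open>x = ali u\<close> and \<open>y = f N u\<close> this turns the
  hypothesis \<open>\<bar>li (f N u) - u\<bar> \<le> E u\<close>, with \<open>E u = 13 (N+1)! u (ln ln u)^N / (ln u)^(N+1)\<close>,
  into \<open>\<bar>ali u - f N u\<bar> \<le> 2 ln u E u\<close>, which is the claimed error. It remains to see that
  \<open>1 < f N u \<le> u\<^sup>2\<close> for all \<open>u \<ge> v\<close>. This holds for large \<open>u\<close>, and by continuity \<open>f N u\<close>
  cannot cross 1 or \<open>u\<^sup>2\<close> beyond \<open>v\<close>: \<open>li (f N u)\<close> stays within \<open>E u \<le> 39/4 u\<close> of \<open>u\<close>,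
  whereas li is very negative near 1 and \<open>li (u\<^sup>2) > 43/4 u\<close>.\<close>

section \<open>The logarithmic integral\<close>

lemma has_real_derivative_ln_abs:
  fixes x :: real
  assumes "x \<noteq> 0"
  shows "((\<lambda>x. ln \<bar>x\<bar>) has_real_derivative 1 / x) (at x)"
proof (cases "0 < x")
  case True
  have "(ln has_real_derivative 1 / x) (at x)"
    using True by (auto intro!: derivative_eq_intros)
  then show ?thesis
    by (rule has_field_derivative_transform_within_open[where S = "{0<..}"]) (use True in auto)
next
  case False
  then have "x < 0" using assms by simp
  have "((\<lambda>x. ln (- x)) has_real_derivative 1 / x) (at x)"
    using \<open>x < 0\<close> by (auto intro!: derivative_eq_intros simp: field_simps)
  then show ?thesis
    by (rule has_field_derivative_transform_within_open[where S = "{..<0}"]) (use \<open>x < 0\<close> in auto)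
qed

text \<open>At \<open>t = 0\<close> the formula gives 1 because \<open>ln 0 = 0\<close>, so this is continuous on \<open>[0, 2]\<close>.\<close>
definition inv_ln_reg :: "real \<Rightarrow> real" where
  "inv_ln_reg t = (if t = 1 then 1 / 2 else 1 / ln t - 1 / (t - 1))"

lemma continuous_on_inv_ln_reg: "continuous_on {0..2} inv_ln_reg"
proof -
  have "continuous (at t within {0..2}) inv_ln_reg" if t: "t \<in> {0..2}" for t
  proof -
    consider "t = 0" | "t = 1" | "t \<in> {0<..} - {1}" using t by force
    then show ?thesis
    proof cases
      case 1
      have "((\<lambda>t::real. 1 / ln t - 1 / (t - 1)) \<longlongrightarrow> 1) (at_right 0)" by real_asymp
      moreover have "\<forall>\<^sub>F s in at_right 0. 1 / ln s - 1 / (s - 1) = inv_ln_reg s"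
        by (auto simp: eventually_at_right_field inv_ln_reg_def intro!: exI[of _ 1])
      ultimately have "(inv_ln_reg \<longlongrightarrow> inv_ln_reg 0) (at_right 0)"
        by (simp add: inv_ln_reg_def Lim_transform_eventually)
      then show ?thesis
        using 1 by (simp add: continuous_within at_within_Icc_at_right)
    next
      case 2
      have "((\<lambda>t::real. 1 / ln t - 1 / (t - 1)) \<longlongrightarrow> 1 / 2) (at 1)" by real_asymp
      moreover have "\<forall>\<^sub>F s in at 1. 1 / ln s - 1 / (s - 1) = inv_ln_reg s"
        by (auto simp: eventually_at inv_ln_reg_def intro!: exI[of _ 1])
      ultimately have "(inv_ln_reg \<longlongrightarrow> inv_ln_reg 1) (at 1)"
        by (simp add: inv_ln_reg_def Lim_transform_eventually)
      then show ?thesis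
        using 2 by (simp add: continuous_at_imp_continuous_at_within isCont_def)
    next
      case 3
      have "\<forall>\<^sub>F s in nhds t. s \<in> {0<..} - {1}"
        using 3 by (intro eventually_nhds_in_open) auto
      then have "\<forall>\<^sub>F s in nhds t. 1 / ln s - 1 / (s - 1) = inv_ln_reg s"
        by eventually_elim (auto simp: inv_ln_reg_def)
      moreover have "isCont (\<lambda>s. 1 / ln s - 1 / (s - 1)) t"
        using 3 by (intro continuous_intros) auto
      ultimately show ?thesis
        by (simp add: isCont_cong continuous_at_imp_continuous_at_within)
    qed
  qed
  then show ?thesis by (simp add: continuous_on_eq_continuous_within)
qed

lemma inv_ln_reg_integrable: "0 \<le> lo \<Longrightarrow> hi \<le> 2 \<Longrightarrow> inv_ln_reg integrable_on {lo..hi}"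
  by (intro integrable_continuous_interval continuous_on_subset[OF continuous_on_inv_ln_reg]) auto

lemma inv_ln_reg_nonneg:
  assumes "0 \<le> t"
  shows "0 \<le> inv_ln_reg t"
proof -
  consider "t = 0" | "t = 1" | "0 < t" "t < 1" | "1 < t" using assms by linarith
  then show ?thesis
  proof cases
    case 3
    then have "inverse (t - 1) \<le> inverse (ln t)"
      by (intro le_imp_inverse_le_neg ln_le_minus_one) auto
    then show ?thesis using 3 by (simp add: inv_ln_reg_def inverse_eq_divide)
  next
    case 4
    then have "inverse (t - 1) \<le> inverse (ln t)"
      by (intro le_imp_inverse_le ln_le_minus_one) auto
    then show ?thesis using 4 by (simp add: inv_ln_reg_def inverse_eq_divide)
  qed (auto simp: inv_ln_reg_def)
qed

lemma integral_inv_ln_eq: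
  assumes "0 \<le> lo" "lo \<le> hi" "hi \<le> 2" "1 \<notin> {lo..hi}"
  shows "integral {lo..hi} (\<lambda>t. 1 / ln t)
           = integral {lo..hi} inv_ln_reg + (ln \<bar>hi - 1\<bar> - ln \<bar>lo - 1\<bar>)"
proof -
  have "((\<lambda>t. ln \<bar>t - 1\<bar>) has_real_derivative 1 / (t - 1) * 1) (at t)"
    if "t \<in> {lo..hi}" for t
    using that assms
    by (intro DERIV_chain2[OF has_real_derivative_ln_abs]) (auto intro!: derivative_eq_intros)
  then have "((\<lambda>t. 1 / (t - 1)) has_integral (ln \<bar>hi - 1\<bar> - ln \<bar>lo - 1\<bar>)) {lo..hi}"
    using assms
    by (intro fundamental_theorem_of_calculus)
       (auto simp: has_real_derivative_iff_has_vector_derivative[symmetric]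
             intro: has_field_derivative_at_within)
  then have "((\<lambda>t. inv_ln_reg t + 1 / (t - 1)) has_integral
               (integral {lo..hi} inv_ln_reg + (ln \<bar>hi - 1\<bar> - ln \<bar>lo - 1\<bar>))) {lo..hi}"
    using assms by (intro has_integral_add integrable_integral inv_ln_reg_integrable) auto
  moreover have "inv_ln_reg t + 1 / (t - 1) = 1 / ln t" if "t \<in> {lo..hi}" for t
    using that assms by (auto simp: inv_ln_reg_def)
  ultimately have "((\<lambda>t. 1 / ln t) has_integral
               (integral {lo..hi} inv_ln_reg + (ln \<bar>hi - 1\<bar> - ln \<bar>lo - 1\<bar>))) {lo..hi}"
    by (rule has_integral_eq[rotated])
  then show ?thesis by (rule integral_unique)
qed

lemma integrable_inv_ln:
  fixes lo hi :: real
  assumes "1 < lo"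
  shows "(\<lambda>t. 1 / ln t) integrable_on {lo..hi}"
proof -
  have "continuous_on {lo..hi} (\<lambda>t. 1 / ln t)"
    using assms by (auto intro!: continuous_intros)
  then show ?thesis by (rule integrable_continuous_interval)
qed

lemma principal_value_tendsto:
  "((\<lambda>e. integral {0..1 - e} (\<lambda>t. 1 / ln t) + integral {1 + e..2} (\<lambda>t. 1 / ln t))
     \<longlongrightarrow> integral {0..2} inv_ln_reg) (at_right 0)"
proof -
  define R where "R s = integral {0..s} inv_ln_reg" for s
  have "continuous_on {0..2} R"
    unfolding R_def by (intro indefinite_integral_continuous_1 inv_ln_reg_integrable) auto
  then have "isCont R 1"
    by (rule continuous_on_interior) auto
  then have "((\<lambda>e. R (1 - e) + (R 2 - R (1 + e))) \<longlongrightarrow> R 1 + (R 2 - R 1)) (at_right 0)"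
    by (intro tendsto_add tendsto_diff tendsto_const isCont_tendsto_compose[OF \<open>isCont R 1\<close>]
        tendsto_eq_intros) auto
  moreover have "\<forall>\<^sub>F e in at_right 0. R (1 - e) + (R 2 - R (1 + e)) =
      integral {0..1 - e} (\<lambda>t. 1 / ln t) + integral {1 + e..2} (\<lambda>t. 1 / ln t)"
    unfolding eventually_at_right_field
  proof (intro exI[of _ 1] conjI allI impI)
    fix e :: real
    assume e: "0 < e" "e < 1"
    have "R (1 + e) + integral {1 + e..2} inv_ln_reg = R 2"
      unfolding R_def using e
      by (intro Henstock_Kurzweil_Integration.integral_combine inv_ln_reg_integrable) auto
    then show "R (1 - e) + (R 2 - R (1 + e)) =
        integral {0..1 - e} (\<lambda>t. 1 / ln t) + integral {1 + e..2} (\<lambda>t. 1 / ln t)"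
      using e by (simp add: integral_inv_ln_eq R_def)
  qed simp
  ultimately show ?thesis
    by (simp add: R_def Lim_transform_eventually)
qed

lemma li_eq_integral:
  assumes "1 < x"
  shows "li x = integral {0..2} inv_ln_reg +
           (if 2 \<le> x then integral {2..x} (\<lambda>t. 1 / ln t) else - integral {x..2} (\<lambda>t. 1 / ln t))"
    (is "_ = _ + ?J")
proof -
  have "\<forall>\<^sub>F e in at_right 0.
      (integral {0..1 - e} (\<lambda>t. 1 / ln t) + integral {1 + e..2} (\<lambda>t. 1 / ln t)) + ?J =
      integral {0..1 - e} (\<lambda>t. 1 / ln t) + integral {1 + e..x} (\<lambda>t. 1 / ln t)"
    unfolding eventually_at_right_field
  proof (intro exI[of _ "min 1 (x - 1)"] conjI allI impI)
    fix e :: real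
    assume e: "0 < e" "e < min 1 (x - 1)"
    show "(integral {0..1 - e} (\<lambda>t. 1 / ln t) + integral {1 + e..2} (\<lambda>t. 1 / ln t)) + ?J =
        integral {0..1 - e} (\<lambda>t. 1 / ln t) + integral {1 + e..x} (\<lambda>t. 1 / ln t)"
    proof (cases "2 \<le> x")
      case True
      have "integral {1 + e..2} (\<lambda>t. 1 / ln t) + integral {2..x} (\<lambda>t. 1 / ln t)
          = integral {1 + e..x} (\<lambda>t. 1 / ln t)"
        using e True by (intro Henstock_Kurzweil_Integration.integral_combine integrable_inv_ln) auto
      then show ?thesis using True by simp
    next
      case False
      have "integral {1 + e..x} (\<lambda>t. 1 / ln t) + integral {x..2} (\<lambda>t. 1 / ln t)
          = integral {1 + e..2} (\<lambda>t. 1 / ln t)"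
        using e False by (intro Henstock_Kurzweil_Integration.integral_combine integrable_inv_ln) auto
      then show ?thesis using False by simp
    qed
  qed (use assms in simp)
  moreover have "((\<lambda>e. (integral {0..1 - e} (\<lambda>t. 1 / ln t) + integral {1 + e..2} (\<lambda>t. 1 / ln t)) + ?J)
      \<longlongrightarrow> integral {0..2} inv_ln_reg + ?J) (at_right 0)"
    by (intro tendsto_add principal_value_tendsto tendsto_const)
  ultimately have "((\<lambda>e. integral {0..1 - e} (\<lambda>t. 1 / ln t) + integral {1 + e..x} (\<lambda>t. 1 / ln t))
      \<longlongrightarrow> integral {0..2} inv_ln_reg + ?J) (at_right 0)"
    by (rule Lim_transform_eventually[rotated])
  then show ?thesis
    unfolding li_def by (intro tendsto_Lim) (auto simp: trivial_limit_at_right_real)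
qed

lemma li_diff:
  assumes "1 < lo" "lo \<le> hi"
  shows "li hi - li lo = integral {lo..hi} (\<lambda>t. 1 / ln t)"
proof -
  have combine: "integral {x..y} (\<lambda>t. 1 / ln t) + integral {y..z} (\<lambda>t. 1 / ln t)
      = integral {x..z} (\<lambda>t. 1 / ln t)" if "1 < x" "x \<le> y" "y \<le> z" for x y z :: real
    using that by (intro Henstock_Kurzweil_Integration.integral_combine integrable_inv_ln) auto
  consider "2 \<le> lo" | "hi < 2" | "lo < 2" "2 \<le> hi" by linarith
  then show ?thesis
    by cases (use assms combine[of 2 lo hi] combine[of lo hi 2] combine[of lo 2 hi]
        in \<open>auto simp: li_eq_integral\<close>)
qed

lemma li_diff_ge:
  assumes "1 < lo" "lo \<le> hi"
  shows "(hi - lo) / ln hi \<le> li hi - li lo"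
proof -
  have "integral {lo..hi} (\<lambda>t. 1 / ln hi) \<le> integral {lo..hi} (\<lambda>t. 1 / ln t)"
  proof (rule integral_le)
    fix t assume "t \<in> {lo..hi}"
    then have "ln t \<le> ln hi" "0 < ln t" using assms by auto
    then show "1 / ln hi \<le> 1 / ln t" by (simp add: frac_le)
  qed (use assms in \<open>auto intro: integrable_inv_ln\<close>)
  then show ?thesis using assms by (simp add: li_diff)
qed

lemma abs_diff_le_li_diff:
  assumes "1 < x" "1 < y"
  shows "\<bar>x - y\<bar> \<le> \<bar>li x - li y\<bar> * ln (max x y)"
proof -
  have *: "\<bar>lo - hi\<bar> \<le> \<bar>li lo - li hi\<bar> * ln hi" if "1 < lo" "lo \<le> hi" for lo hi
  proof -
    have "(hi - lo) / ln hi \<le> \<bar>li lo - li hi\<bar>" using li_diff_ge[OF that] by linarith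
    then show ?thesis using that by (simp add: divide_le_eq)
  qed
  show ?thesis
  proof (cases "x \<le> y")
    case True
    then show ?thesis using *[of x y] assms by (simp add: max_def)
  next
    case False
    then show ?thesis
      using *[of y x] assms
      by (simp add: max_def abs_minus_commute[of y x] abs_minus_commute[of "li y" "li x"])
  qed
qed

lemma ali_eqI:
  assumes "1 < x" "li x = u"
  shows "ali u = x"
  unfolding ali_def
proof (rule the_equality)
  fix y assume "1 < y \<and> li y = u"
  then show "y = x" using abs_diff_le_li_diff[of y x] assms by simp
qed (use assms in simp)

lemma continuous_on_li: "continuous_on {1<..} li"
proof (intro continuous_at_imp_continuous_on ballI)
  fix x :: real assume "x \<in> {1<..}"
  define lo where "lo = (1 + x) / 2"
  have lo: "1 < lo" "lo < x" using \<open>x \<in> {1<..}\<close> by (auto simp: lo_def)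
  have "continuous_on {lo..x + 1} (\<lambda>y. li lo + integral {lo..y} (\<lambda>t. 1 / ln t))"
    using lo by (intro continuous_intros indefinite_integral_continuous_1 integrable_inv_ln)
  then have "continuous_on {lo..x + 1} li"
    by (rule continuous_on_eq) (use lo li_diff in force)
  then show "isCont li x"
    by (rule continuous_on_interior) (use lo in auto)
qed

lemma li_two_nonneg: "0 \<le> li 2"
proof -
  have "0 \<le> integral {0..2} inv_ln_reg"
    by (intro integral_nonneg inv_ln_reg_integrable inv_ln_reg_nonneg) auto
  then show ?thesis by (simp add: li_eq_integral)
qed

lemma li_ge:
  assumes "2 \<le> x"
  shows "(x - 2) / ln x \<le> li x"
  using li_diff_ge[of 2 x] li_two_nonneg assms by simp

lemma li_le_near_one:
  assumes "1 < x" "x \<le> 2"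
  shows "li x \<le> li 2 + ln (x - 1)"
proof -
  have "0 \<le> integral {x..2} inv_ln_reg"
    using assms by (intro integral_nonneg inv_ln_reg_integrable inv_ln_reg_nonneg) auto
  then show ?thesis
    using assms li_diff[of x 2] integral_inv_ln_eq[of x 2] by simp
qed

lemma ex_li_le: "\<exists>x>1. x \<le> 2 \<and> li x \<le> u"
proof (intro exI conjI)
  define x where "x = 1 + exp (min 0 (u - li 2))"
  show "1 < x" "x \<le> 2" by (auto simp: x_def)
  then have "li x \<le> li 2 + ln (x - 1)" by (rule li_le_near_one)
  also have "\<dots> \<le> u" by (simp add: x_def)
  finally show "li x \<le> u" .
qed

lemma li_ali_and_bounds:
  assumes "2 \<le> b" "u \<le> li b"
  shows "1 < ali u" "ali u \<le> b" "li (ali u) = u"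
proof -
  obtain x0 where x0: "1 < x0" "x0 \<le> 2" "li x0 \<le> u" using ex_li_le by blast
  have "continuous_on {x0..b} li"
    using x0 by (intro continuous_on_subset[OF continuous_on_li]) auto
  then obtain x where "x0 \<le> x" "x \<le> b" "li x = u"
    using IVT'[of li x0 u b] x0 assms by auto
  with x0 ali_eqI[of x u] show "1 < ali u" "ali u \<le> b" "li (ali u) = u" by auto
qed

lemma exp_le_imp_ln_ge: "exp y \<le> (x::real) \<Longrightarrow> 0 < x \<and> y \<le> ln x"
  by (metis exp_gt_zero less_le_trans ln_ge_iff)

lemma exp_two_gt: "7 < exp (2::real)"
proof -
  have "(1 + 2 / 40) ^ 40 \<le> exp (2::real)"
    using exp_ge_one_plus_x_over_n_power_n[of 40 2] by simp
  moreover have "(7::real) < (1 + 2 / 40) ^ 40" by (simp add: power_divide)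
  ultimately show ?thesis by linarith
qed

lemma exp_ge_23_mult:
  fixes L :: real
  assumes "7 \<le> L"
  shows "23 * L \<le> exp L"
proof -
  have "(1 + 7 / 14) ^ 14 \<le> exp (7::real)"
    using exp_ge_one_plus_x_over_n_power_n[of 14 7] by simp
  moreover have "(291::real) < (1 + 7 / 14) ^ 14" by (simp add: power_divide)
  ultimately have "291 * (1 + (L - 7)) \<le> exp 7 * exp (L - 7)"
    using assms exp_ge_add_one_self[of "L - 7"] by (intro mult_mono) auto
  also have "\<dots> = exp L" by (simp flip: exp_add)
  finally have "291 * L - 1746 \<le> exp L" by (simp add: algebra_simps)
  then show ?thesis using assms by linarith
qed

lemma li_sq_gt:
  assumes "exp 7 \<le> w"
  shows "43 / 4 * w < li (w\<^sup>2)"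
proof -
  define L where "L = ln w"
  have w: "0 < w" "7 \<le> L" using exp_le_imp_ln_ge[OF assms] by (auto simp: L_def)
  have "23 * L \<le> w" using exp_ge_23_mult[of L] w by (simp add: L_def)
  then have "7 * 161 \<le> L * w"
    using w by (intro mult_mono) auto
  moreover have "23 * (L * w) \<le> w * w"
    using mult_right_mono[OF \<open>23 * L \<le> w\<close>, of w] w by (simp add: mult.assoc)
  ultimately have Lw: "43 / 2 * (L * w) < w * w - 2" "2 \<le> w * w" by linarith+
  have "ln (w\<^sup>2) = 2 * L" using w by (simp add: L_def ln_realpow)
  then have "43 / 4 * w < (w\<^sup>2 - 2) / ln (w\<^sup>2)"
    using Lw w by (simp add: field_simps power2_eq_square)
  also have "\<dots> \<le> li (w\<^sup>2)"
    using Lw by (intro li_ge) (simp add: power2_eq_square)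
  finally show ?thesis .
qed

section \<open>Inverting an approximate inverse of li\<close>

lemma abs_ali_diff_le:
  assumes "exp 7 \<le> u" "1 < y" "y \<le> u\<^sup>2" "\<bar>li y - u\<bar> \<le> e"
  shows "\<bar>ali u - y\<bar> \<le> 2 * ln u * e"
proof -
  have "1 + 7 \<le> u" using exp_ge_add_one_self[of 7] assms(1) by linarith
  then have u: "0 < u" "2 \<le> u\<^sup>2"
    using mult_mono[of 1 u 2 u] by (auto simp: power2_eq_square)
  moreover have "u \<le> li (u\<^sup>2)" using li_sq_gt[OF assms(1)] u by simp
  ultimately have x: "1 < ali u" "ali u \<le> u\<^sup>2" "li (ali u) = u"
    using li_ali_and_bounds by auto
  have "ln (max (ali u) y) \<le> ln (u\<^sup>2)" using x assms by (subst ln_le_cancel_iff) auto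
  also have "\<dots> = 2 * ln u" using u by (simp add: ln_realpow)
  finally have ln_max: "ln (max (ali u) y) \<le> 2 * ln u" .
  have "\<bar>ali u - y\<bar> \<le> \<bar>li (ali u) - li y\<bar> * ln (max (ali u) y)"
    using x assms by (intro abs_diff_le_li_diff)
  also have "\<dots> \<le> e * (2 * ln u)"
    using x assms ln_max by (intro mult_mono) (auto simp: abs_minus_commute[of u])
  finally show ?thesis by (simp add: mult_ac)
qed

text \<open>\<open>E u \<le> 39/4 u\<close> keeps \<open>li (F u)\<close> between \<open>-35/4 u\<close> and \<open>43/4 u\<close>: this prevents \<open>F u\<close>
  from reaching values near 1, where li is very negative, and from reaching \<open>u\<^sup>2\<close>, as
  \<open>li (u\<^sup>2) > 43/4 u\<close>.\<close>
locale approx_li_inverse =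
  fixes F E :: "real \<Rightarrow> real" and v :: real
  assumes v_ge: "exp 7 \<le> v"
    and continuous_F: "continuous_on {v..} F"
    and continuous_E: "continuous_on {v..} E"
    and E_le: "\<And>u. v \<le> u \<Longrightarrow> E u \<le> 39 / 4 * u"
    and F_eventually: "\<forall>\<^sub>F u in at_top. 2 < F u \<and> F u < u\<^sup>2"
    and li_F_approx: "\<And>u. v < u \<Longrightarrow> \<bar>li (F u) - u\<bar> \<le> E u"
begin

lemma F_gt_one:
  assumes "v \<le> u"
  shows "1 < F u"
proof (rule ccontr)
  assume "\<not> 1 < F u"
  obtain U where U: "\<And>w. U \<le> w \<Longrightarrow> 2 < F w"
    using F_eventually by (auto simp: eventually_at_top_linorder)
  define u1 where "u1 = max U u"
  have u1: "u \<le> u1" "2 < F u1" "0 < u1"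
    using U exp_le_imp_ln_ge[OF v_ge] assms by (auto simp: u1_def)
  obtain x0 where x0: "1 < x0" "x0 \<le> 2" "li x0 \<le> - 9 * u1" using ex_li_le by blast
  have "continuous_on {u..u1} F"
    by (rule continuous_on_subset[OF continuous_F]) (use assms in auto)
  then obtain w where w: "u \<le> w" "w \<le> u1" "F w = x0"
    using IVT'[of F u x0 u1] u1 x0 \<open>\<not> 1 < F u\<close> by auto
  then have "v < w" using assms x0 \<open>\<not> 1 < F u\<close> by (cases "w = u") auto
  then have "\<bar>li x0 - w\<bar> \<le> 39 / 4 * w" using li_F_approx[of w] E_le[of w] w by simp
  then show False using x0 w u1 by linarith
qed

lemma abs_li_F_sub_le:
  assumes "v \<le> u"
  shows "\<bar>li (F u) - u\<bar> \<le> E u"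
proof (cases "u = v")
  case True
  define g where "g w = \<bar>li (F w) - w\<bar> - E w" for w
  have "continuous_on {v..v + 1} g"
    unfolding g_def using F_gt_one
    by (intro continuous_intros continuous_on_compose2[OF continuous_on_li]
        continuous_on_subset[OF continuous_F] continuous_on_subset[OF continuous_E]) auto
  then have "(g \<longlongrightarrow> g v) (at_right v)" by (rule continuous_on_Icc_at_rightD) simp
  moreover have "\<forall>\<^sub>F w in at_right v. g w \<le> 0"
    using li_F_approx by (auto simp: g_def eventually_at_right_field intro: exI[of _ "v + 1"])
  ultimately have "g v \<le> 0" by (rule tendsto_upperbound) simp
  then show ?thesis using True by (simp add: g_def)
qed (use assms li_F_approx in simp)

lemma F_le_sq:
  assumes "v \<le> u"
  shows "F u \<le> u\<^sup>2"
proof (rule ccontr)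
  assume "\<not> F u \<le> u\<^sup>2"
  obtain U where U: "\<And>w. U \<le> w \<Longrightarrow> F w < w\<^sup>2"
    using F_eventually by (auto simp: eventually_at_top_linorder)
  define u1 where "u1 = max U u"
  have u1: "u \<le> u1" "F u1 - u1\<^sup>2 \<le> 0" using U[of u1] by (auto simp: u1_def)
  have "continuous_on {u..u1} (\<lambda>w. F w - w\<^sup>2)"
    using assms by (intro continuous_intros continuous_on_subset[OF continuous_F]) auto
  then obtain w where w: "u \<le> w" "w \<le> u1" "F w - w\<^sup>2 = 0"
    using IVT2'[of "\<lambda>w. F w - w\<^sup>2" u1 0 u] u1 \<open>\<not> F u \<le> u\<^sup>2\<close> by auto
  then have "\<bar>li (w\<^sup>2) - w\<bar> \<le> 39 / 4 * w"
    using abs_li_F_sub_le[of w] E_le[of w] assms by simp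
  moreover have "43 / 4 * w < li (w\<^sup>2)" using v_ge w assms by (intro li_sq_gt) simp
  ultimately show False by linarith
qed

theorem abs_ali_sub_F_le:
  assumes "v \<le> u"
  shows "\<bar>ali u - F u\<bar> \<le> 2 * ln u * E u"
  using assms v_ge by (intro abs_ali_diff_le F_gt_one F_le_sq abs_li_F_sub_le) auto

end

section \<open>The approximations \<open>f N\<close>\<close>

lemma poly_div_exp_tendsto_0: "((\<lambda>y::real. poly p y / exp y) \<longlongrightarrow> 0) at_top"
proof -
  have "((\<lambda>y. \<Sum>i\<le>degree p. coeff p i * (y ^ i / exp y)) \<longlongrightarrow> 0) at_top"
    by (intro tendsto_null_sum tendsto_mult_right_zero tendsto_power_div_exp_0)
  then show ?thesis by (simp add: poly_altdef sum_divide_distrib)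
qed

lemma poly_ln_div_power_tendsto_0:
  assumes "1 \<le> n"
  shows "((\<lambda>x::real. poly p (ln x) / x ^ n) \<longlongrightarrow> 0) at_top"
proof -
  have "((\<lambda>x. poly p (ln x) / exp (ln x)) \<longlongrightarrow> 0) at_top"
    by (rule filterlim_compose[OF poly_div_exp_tendsto_0 ln_at_top])
  moreover have "((\<lambda>x::real. (1 / x) ^ (n - 1)) \<longlongrightarrow> 0 ^ (n - 1)) at_top"
    by (intro tendsto_power tendsto_divide_0[OF tendsto_const]
        filterlim_at_top_imp_at_infinity filterlim_ident)
  ultimately have "((\<lambda>x. poly p (ln x) / exp (ln x) * (1 / x) ^ (n - 1))
      \<longlongrightarrow> 0 * 0 ^ (n - 1)) at_top"
    by (rule tendsto_mult)
  moreover have "\<forall>\<^sub>F x in at_top.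
      poly p (ln x) / exp (ln x) * (1 / x) ^ (n - 1) = poly p (ln x) / x ^ n"
    using eventually_gt_at_top[of 0]
  proof eventually_elim
    case (elim x)
    have "x ^ n = x * x ^ (n - 1)" using assms by (simp add: power_eq_if)
    then show ?case using elim by (simp add: power_one_over)
  qed
  ultimately show ?thesis by (simp add: Lim_transform_eventually)
qed

lemma f_correction_tendsto_0:
  "((\<lambda>u::real. \<Sum>n=1..N. poly (P (n - 1)) (ln (ln u)) / ln u ^ n) \<longlongrightarrow> 0) at_top"
  by (intro tendsto_null_sum filterlim_compose[OF poly_ln_div_power_tendsto_0 ln_at_top]) auto

lemma eventually_f_bounds: "\<forall>\<^sub>F u in at_top. 2 < f N u \<and> f N u < u\<^sup>2"
proof -
  define S where "S u = (\<Sum>n=1..N. poly (P (n - 1)) (ln (ln u)) / ln u ^ n)" for u :: real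
  have "\<forall>\<^sub>F u in at_top. \<bar>S u\<bar> < 1 / 2"
    using tendstoD[OF f_correction_tendsto_0, of "1 / 2" N] by (simp add: S_def dist_real_def)
  moreover have "\<forall>\<^sub>F u::real in at_top. 4 < u * ln u" by real_asymp
  moreover have "\<forall>\<^sub>F u::real in at_top. 3 / 2 * (u * ln u) < u\<^sup>2" by real_asymp
  ultimately show ?thesis
  proof eventually_elim
    case (elim u)
    have "f N u = (1 + S u) * (u * ln u)" by (simp add: f_def S_def algebra_simps)
    moreover have "1 / 2 * (u * ln u) \<le> (1 + S u) * (u * ln u)"
      "(1 + S u) * (u * ln u) \<le> 3 / 2 * (u * ln u)"
      using elim by (intro mult_right_mono; simp)+
    ultimately show ?case using elim by linarith
  qed
qed

lemma isCont_f: "1 < u \<Longrightarrow> isCont (f N) u"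
  unfolding f_def by (intro continuous_intros) auto

lemma x_div_ln_mono:
  fixes s t :: real
  assumes "exp 1 \<le> s" "s \<le> t"
  shows "s / ln s \<le> t / ln t"
proof (rule DERIV_nonneg_imp_nondecreasing[OF assms(2)])
  fix x assume "s \<le> x" "x \<le> t"
  then have x: "0 < x" "1 \<le> ln x"
    using exp_le_imp_ln_ge[of 1 x] assms by auto
  have "((\<lambda>x. x / ln x) has_real_derivative (ln x - 1) / (ln x)\<^sup>2) (at x)"
    using x by (auto intro!: derivative_eq_intros simp: field_simps power2_eq_square)
  then show "\<exists>y. ((\<lambda>x. x / ln x) has_real_derivative y) (at x) \<and> 0 \<le> y"
    using x by auto
qed

definition f_error :: "nat \<Rightarrow> real \<Rightarrow> real" where
  "f_error N u = 13 * fact (N + 1) * (u * ln (ln u) ^ N / ln u ^ (N + 1))"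

lemma f_error_nonneg: "exp 1 \<le> u \<Longrightarrow> 0 \<le> f_error N u"
  using exp_le_imp_ln_ge[of 1 u] exp_le_imp_ln_ge[of 0 "ln u"]
  unfolding f_error_def by (intro mult_nonneg_nonneg divide_nonneg_nonneg zero_le_power) auto

lemma continuous_on_f_error: "1 < lo \<Longrightarrow> continuous_on {lo..} (f_error N)"
  unfolding f_error_def by (intro continuous_intros) auto

lemma two_ln_mult_f_error:
  "1 < u \<Longrightarrow> 2 * ln u * f_error N u = 26 * fact (N + 1) * u * (ln (ln u) / ln u) ^ N"
  by (simp add: f_error_def power_divide field_simps)

lemma f_error_le:
  fixes c u :: real
  assumes "0 < c" "fact N < c ^ N" "c \<le> ln u / ln (ln u)"
    and "exp 1 < u" "4 * (real N + 1) / 3 \<le> ln u"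
  shows "f_error N u \<le> 39 / 4 * u"
proof -
  define L where "L = ln u"
  define r where "r = ln L / L"
  have "0 < u" "1 < L"
    using exp_le_imp_ln_ge[of 1 u] assms(4) ln_less_cancel_iff[of "exp 1" u]
    by (auto simp: L_def)
  then have L: "0 < u" "1 < L" "0 < ln L" "0 < r" by (auto simp: r_def)
  have "c ^ N \<le> (1 / r) ^ N" using assms by (intro power_mono) (auto simp: r_def L_def)
  then have "c ^ N * r ^ N \<le> 1" using L by (simp add: power_one_over field_simps)
  moreover have "fact N * r ^ N \<le> c ^ N * r ^ N"
    using assms L by (intro mult_right_mono) auto
  ultimately have "fact N * r ^ N \<le> 1" by linarith
  have "f_error N u = 13 * (real N + 1) * (fact N * r ^ N) * (u / L)"
    using L by (simp add: f_error_def L_def r_def power_divide field_simps)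
  also have "\<dots> \<le> 13 * (real N + 1) * 1 * (u / L)"
    using \<open>fact N * r ^ N \<le> 1\<close> L by (intro mult_right_mono mult_left_mono) auto
  also have "\<dots> = 13 * u * ((real N + 1) / L)" by simp
  also have "\<dots> \<le> 13 * u * (3 / 4)"
  proof (rule mult_left_mono)
    have "real N + 1 \<le> 3 / 4 * L" using assms(5) by (simp add: L_def)
    then show "(real N + 1) / L \<le> 3 / 4" using L by (simp add: pos_divide_le_eq)
  qed (use L in simp)
  finally show ?thesis by simp
qed

lemma ln_above_thresholds:
  fixes c d \<alpha> \<beta> xN u :: real
  assumes "\<alpha> = max (exp 1) (max c d)" "exp 1 \<le> \<beta>" "\<beta> / ln \<beta> = \<alpha>"
    and "xN = max \<beta> (max (4 * (real N + 1) / 3) (exp 2))" "exp xN < u"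
  shows "exp 7 < u" "4 * (real N + 1) / 3 \<le> ln u" "c \<le> ln u / ln (ln u)"
proof -
  have "0 < u" using assms(5) exp_gt_zero[of xN] by linarith
  then have lnu: "xN < ln u" using assms(5) ln_less_cancel_iff[of "exp xN" u] by simp
  have "7 < xN" using exp_two_gt assms(4) by simp
  then show "exp 7 < u" using assms(5) by (smt (verit) exp_less_cancel_iff)
  show "4 * (real N + 1) / 3 \<le> ln u" using lnu assms(4) by simp
  have "c \<le> \<beta> / ln \<beta>" using assms(1,3) by simp
  also have "\<dots> \<le> ln u / ln (ln u)" using assms(2,4) lnu by (intro x_div_ln_mono) auto
  finally show "c \<le> ln u / ln (ln u)" .
qed

lemma approx_li_inverse_f:
  fixes c v :: real
  assumes "0 < c" "fact N < c ^ N"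
    and thresholds: "\<And>u. v \<le> u \<Longrightarrow>
      exp 7 < u \<and> 4 * (real N + 1) / 3 \<le> ln u \<and> c \<le> ln u / ln (ln u)"
    and "\<And>u. v < u \<Longrightarrow> \<bar>li (f N u) - u\<bar> \<le> f_error N u"
  shows "approx_li_inverse (f N) (f_error N) v"
proof
  have exp_1_less: "exp 1 < u" if "v \<le> u" for u
    using thresholds[OF that] exp_less_cancel_iff[of 1 7] by linarith
  then have one_less: "1 < u" if "v \<le> u" for u
    using that exp_ge_add_one_self[of 1] by force
  show "exp 7 \<le> v" using thresholds[of v] by simp
  show "continuous_on {v..} (f N)"
    by (intro continuous_at_imp_continuous_on ballI isCont_f) (use one_less in auto)
  show "continuous_on {v..} (f_error N)"
    by (intro continuous_on_f_error one_less) simp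
  show "f_error N u \<le> 39 / 4 * u" if "v \<le> u" for u
    using thresholds[OF that] exp_1_less[OF that] assms(1,2) by (intro f_error_le) auto
  show "\<forall>\<^sub>F u in at_top. 2 < f N u \<and> f N u < u\<^sup>2" by (rule eventually_f_bounds)
qed (use assms(4) in auto)

lemma fact_less_power:
  fixes c :: real
  assumes "1 \<le> N" "0 < c" "1 \<le> c * (1 - (\<Sum>n=1..N. fact n / c ^ n))"
  shows "fact N < c ^ N"
proof -
  have "(\<Sum>n=1..N. fact n / c ^ n) < 1"
    using assms(2,3) by (smt (verit) mult_nonneg_nonpos)
  moreover have "fact N / c ^ N \<le> (\<Sum>n=1..N. fact n / c ^ n)"
    using assms by (intro member_le_sum) auto
  ultimately have "fact N / c ^ N < 1" by linarith
  then show ?thesis using assms(2) by (simp add: divide_less_eq)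
qed

lemma abs_diff_le_iff_ex_theta:
  fixes x y D :: real
  assumes "0 \<le> D"
  shows "\<bar>x - y\<bar> \<le> D \<longleftrightarrow> (\<exists>\<theta>. \<bar>\<theta>\<bar> \<le> 1 \<and> x = y + \<theta> * D)"
proof
  assume le: "\<bar>x - y\<bar> \<le> D"
  show "\<exists>\<theta>. \<bar>\<theta>\<bar> \<le> 1 \<and> x = y + \<theta> * D"
  proof (cases "D = 0")
    case False
    then show ?thesis
      using le assms by (intro exI[of _ "(x - y) / D"]) (auto simp: abs_divide divide_le_eq)
  qed (use le in \<open>auto intro: exI[of _ 0]\<close>)
next
  assume "\<exists>\<theta>. \<bar>\<theta>\<bar> \<le> 1 \<and> x = y + \<theta> * D"
  then obtain \<theta> where "\<bar>\<theta>\<bar> \<le> 1" "x = y + \<theta> * D" by blast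
  then show "\<bar>x - y\<bar> \<le> D"
    using assms mult_right_mono[of "\<bar>\<theta>\<bar>" 1 D] by (simp add: abs_mult)
qed

theorem theorem5p16:
  fixes N :: nat and c d \<alpha> \<beta> xN v :: real
  assumes N: "N \<ge> 1"
    and c_pos: "c > 0"
    and c_prop: "\<forall>x::real. x \<ge> c \<longrightarrow> x * (1 - (\<Sum>n=1..N. fact n / x ^ n)) \<ge> 1"
    and d_pos: "d > 0"
    and d_prop: "\<forall>x::complex. norm x \<ge> d \<longrightarrow>
        (\<exists>\<theta>::complex. norm \<theta> \<le> 1 \<and>
           Ln (inverse (1 - (\<Sum>n=1..N. fact n / x ^ n)))
             = (\<Sum>n=1..N. of_int (a n) / of_nat n / x ^ n)
               + \<theta> * of_int (a (N + 1)) / of_nat (N + 1) / x ^ (N + 1))"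
    and \<alpha>_def: "\<alpha> = max (exp 1) (max c d)"
    and \<beta>_ge: "\<beta> \<ge> exp 1"
    and \<beta>_sol: "\<beta> / ln \<beta> = \<alpha>"
    and xN_def: "xN = max \<beta> (max (4 * (real N + 1) / 3) (exp 2))"
    and v_gt: "v > exp xN"
    and v_prop: "\<forall>u. u > v \<longrightarrow> (\<exists>\<theta>::real. \<bar>\<theta>\<bar> \<le> 1 \<and>
        li (f N u) - u = \<theta> * 13 * fact (N + 1) * (u * (ln (ln u)) ^ N / (ln u) ^ (N + 1)))"
  shows "\<forall>u. u \<ge> v \<longrightarrow> (\<exists>\<theta>::real. \<bar>\<theta>\<bar> \<le> 1 \<and>
        ali u = f N u + 26 * \<theta> * fact (N + 1) * u * (ln (ln u) / ln u) ^ N)"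
proof -
  have thresholds: "exp 7 < u \<and> 4 * (real N + 1) / 3 \<le> ln u \<and> c \<le> ln u / ln (ln u)"
    if "v \<le> u" for u
    using ln_above_thresholds[OF \<alpha>_def \<beta>_ge \<beta>_sol xN_def] v_gt that by auto
  then have exp_1_less: "exp 1 < u" if "v \<le> u" for u
    using exp_less_cancel_iff[of 1 7] that by (smt (verit))
  have li_f_approx: "\<bar>li (f N u) - u\<bar> \<le> f_error N u" if "v < u" for u
  proof -
    obtain \<theta> where "\<bar>\<theta>\<bar> \<le> 1"
      "li (f N u) - u = \<theta> * 13 * fact (N + 1) * (u * ln (ln u) ^ N / ln u ^ (N + 1))"
      using v_prop \<open>v < u\<close> by blast
    then have "\<bar>\<theta>\<bar> \<le> 1 \<and> li (f N u) = u + \<theta> * f_error N u"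
      by (simp add: f_error_def mult.assoc)
    moreover have "0 \<le> f_error N u"
      using \<open>v < u\<close> by (intro f_error_nonneg less_imp_le exp_1_less) simp
    ultimately show ?thesis using abs_diff_le_iff_ex_theta by blast
  qed
  interpret approx_li_inverse "f N" "f_error N" v
    using c_pos fact_less_power[OF N c_pos] c_prop thresholds li_f_approx
    by (intro approx_li_inverse_f) auto
  show ?thesis
  proof (intro allI impI)
    fix u assume "v \<le> u"
    then have "1 < u" "0 \<le> 2 * ln u * f_error N u"
      using exp_1_less[OF \<open>v \<le> u\<close>] exp_ge_add_one_self[of 1] f_error_nonneg[of u N] by auto
    then obtain \<theta> where "\<bar>\<theta>\<bar> \<le> 1" "ali u = f N u + \<theta> * (2 * ln u * f_error N u)"
      using abs_ali_sub_F_le[OF \<open>v \<le> u\<close>] abs_diff_le_iff_ex_theta by blast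
    then show "\<exists>\<theta>. \<bar>\<theta>\<bar> \<le> 1 \<and>
        ali u = f N u + 26 * \<theta> * fact (N + 1) * u * (ln (ln u) / ln u) ^ N"
      unfolding two_ln_mult_f_error[OF \<open>1 < u\<close>] by (intro exI[of _ \<theta>]) (simp add: mult_ac)
  qed
qed

end
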